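(* Let $\mathcal{C}$ be a permutation class (resp. polyomino class) and let $\mathcal{M}$ be its canonical $m$-basis. Assume that for every $M\in\mathcal{M}$ there exists a permutation (resp. polyomino) $P$ such that $M\preccurlyeq P$ and $M'\not\preccurlyeq P$ for all $M'\in\mathcal{M}$ with $M'\neq M$. Then $\mathcal{M}$ is a minimal $m$-basis of $\mathcal{C}$, and consequently $\mathcal{C}$ has a unique minimal $m$-basis.
   Context: Binary matrices have entries in $\{0,1\}$; $M'\preccurlyeq M$ (submatrix order) means $M'$ is obtained from $M$ by deleting some rows and/or columns. A permutation $\sigma$ of $\{1,\dots,n\}$ is identified with its permutation matrix ($M_\sigma(i,j)=1$ iff $i=\sigma(j)$); a permutation class is a set of permutations closed under taking submatrices that are permutation matrices. A quasi-permutation matrix is a binary matrix with at most one $1$ per row and column. A polyomino is a finite edge-connected union of unit cells of $\mathbb{Z}^2$ up to translation, identified with the binary matrix of its minimal bounding rectangle ($1$ for cells, $0$ otherwise); a polyomino class is a set of polyominoes closed under taking submatrices that are polyominoes. $Av(\mathcal{M})$ denotes the set of permutations (resp. polyominoes) with no submatrix in $\mathcal{M}$. For a class $\mathcal{C}$, $\mathcal{C}^+$ is the set of binary matrices that are submatrices of some element of $\mathcal{C}$; the canonical $m$-basis of $\mathcal{C}$ is the set of $\preccurlyeq$-minimal quasi-permutation matrices (permutation case), resp. binary matrices (polyomino case), not in $\mathcal{C}^+$. An $m$-basis of $\mathcal{C}$ is an antichain $\mathcal{M}$ with $\mathcal{C}=Av(\mathcal{M})$. A minimal $m$-basis of $\mathcal{C}$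 is an $m$-basis $\mathcal{M}$ such that (1) no strict subset $\mathcal{M}'\subsetneq\mathcal{M}$ satisfies $\mathcal{C}=Av(\mathcal{M}')$, and (2) for every $M\in\mathcal{M}$ and every submatrix $M'\preccurlyeq M$, either $M'=M$ or $\mathcal{C}\neq Av\big((\mathcal{M}\setminus\{M\})\cup\{M'\}\big)$. *)

theory Defs
  imports "HOL-Combinatorics.Permutations"
begin

text \<open>A binary matrix is a triple (number of rows, number of columns, entries);
  entries are 0-indexed and required to be False outside the dimensions, so that
  HOL equality of triples is equality of matrices.\<close>
type_synonym bmat = "nat \<times> nat \<times> (nat \<Rightarrow> nat \<Rightarrow> bool)"

definition wf_bmat :: "bmat \<Rightarrow> bool" where
  "wf_bmat M \<longleftrightarrow> (case M of (m, n, f) \<Rightarrow> (\<forall>i j. f i j \<longrightarrow> i < m \<and> j < n))"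

definition submat :: "bmat \<Rightarrow> bmat \<Rightarrow> bool" (infix "\<preccurlyeq>" 50) where
  "M' \<preccurlyeq> M \<longleftrightarrow> wf_bmat M' \<and> wf_bmat M \<and>
     (case M' of (m', n', g) \<Rightarrow> case M of (m, n, f) \<Rightarrow>
       (\<exists>r c. strict_mono_on {..<m'} r \<and> r ` {..<m'} \<subseteq> {..<m} \<and>
              strict_mono_on {..<n'} c \<and> c ` {..<n'} \<subseteq> {..<n} \<and>
              (\<forall>i<m'. \<forall>j<n'. g i j = f (r i) (c j))))"

definition is_perm_mat :: "bmat \<Rightarrow> bool" where
  "is_perm_mat M \<longleftrightarrow> wf_bmat M \<and>
     (case M of (m, n, f) \<Rightarrow> m = n \<and>
        (\<exists>\<sigma>. \<sigma> permutes {..<n} \<and> (\<forall>i<n. \<forall>j<n. f i j = (i = \<sigma> j))))"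

definition is_quasi_perm_mat :: "bmat \<Rightarrow> bool" where
  "is_quasi_perm_mat M \<longleftrightarrow> wf_bmat M \<and>
     (case M of (m, n, f) \<Rightarrow>
        (\<forall>i j j'. f i j \<and> f i j' \<longrightarrow> j = j') \<and> (\<forall>i i' j. f i j \<and> f i' j \<longrightarrow> i = i'))"

definition cell_adj :: "(nat \<Rightarrow> nat \<Rightarrow> bool) \<Rightarrow> nat \<times> nat \<Rightarrow> nat \<times> nat \<Rightarrow> bool" where
  "cell_adj f a b \<longleftrightarrow> f (fst a) (snd a) \<and> f (fst b) (snd b) \<and>
     ((fst a = fst b \<and> (snd b = Suc (snd a) \<or> snd a = Suc (snd b))) \<or>
      (snd a = snd b \<and> (fst b = Suc (fst a) \<or> fst a = Suc (fst b))))"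

text \<open>A polyomino, identified with the binary matrix of its minimal bounding rectangle:
  nonempty, every row and column contains a cell, and the cells are edge-connected.\<close>
definition is_polyomino :: "bmat \<Rightarrow> bool" where
  "is_polyomino M \<longleftrightarrow> wf_bmat M \<and>
     (case M of (m, n, f) \<Rightarrow> 0 < m \<and> 0 < n \<and>
        (\<forall>i<m. \<exists>j. f i j) \<and> (\<forall>j<n. \<exists>i. f i j) \<and>
        (\<forall>a b. f (fst a) (snd a) \<and> f (fst b) (snd b) \<longrightarrow> (cell_adj f)\<^sup>*\<^sup>* a b))"

datatype setting = Perm | Poly

fun obj :: "setting \<Rightarrow> bmat \<Rightarrow> bool" where
  "obj Perm M = is_perm_mat M"
| "obj Poly M = is_polyomino M"

fun amb :: "setting \<Rightarrow> bmat \<Rightarrow> bool" where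
  "amb Perm M = is_quasi_perm_mat M"
| "amb Poly M = wf_bmat M"

definition is_class :: "setting \<Rightarrow> bmat set \<Rightarrow> bool" where
  "is_class s C \<longleftrightarrow> C \<subseteq> {P. obj s P} \<and> (\<forall>P\<in>C. \<forall>Q. obj s Q \<and> Q \<preccurlyeq> P \<longrightarrow> Q \<in> C)"

definition Av :: "setting \<Rightarrow> bmat set \<Rightarrow> bmat set" where
  "Av s \<M> = {P. obj s P \<and> (\<forall>M\<in>\<M>. \<not> M \<preccurlyeq> P)}"

definition cplus :: "bmat set \<Rightarrow> bmat set" where
  "cplus C = {M. \<exists>P\<in>C. M \<preccurlyeq> P}"

definition canonical_mbasis :: "setting \<Rightarrow> bmat set \<Rightarrow> bmat set" where
  "canonical_mbasis s C = {M. amb s M \<and> M \<notin> cplus C \<and>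
      (\<forall>M'. amb s M' \<and> M' \<notin> cplus C \<and> M' \<preccurlyeq> M \<longrightarrow> M' = M)}"

definition antichain_bm :: "bmat set \<Rightarrow> bool" where
  "antichain_bm \<M> \<longleftrightarrow> (\<forall>M\<in>\<M>. \<forall>M'\<in>\<M>. M \<preccurlyeq> M' \<longrightarrow> M = M')"

definition is_mbasis :: "setting \<Rightarrow> bmat set \<Rightarrow> bmat set \<Rightarrow> bool" where
  "is_mbasis s C \<M> \<longleftrightarrow> \<M> \<subseteq> {M. wf_bmat M} \<and> antichain_bm \<M> \<and> C = Av s \<M>"

definition is_minimal_mbasis :: "setting \<Rightarrow> bmat set \<Rightarrow> bmat set \<Rightarrow> bool" where
  "is_minimal_mbasis s C \<M> \<longleftrightarrow> is_mbasis s C \<M> \<and>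
     (\<forall>\<M>'. \<M>' \<subset> \<M> \<longrightarrow> C \<noteq> Av s \<M>') \<and>
     (\<forall>M\<in>\<M>. \<forall>M'. M' \<preccurlyeq> M \<longrightarrow> M' = M \<or> C \<noteq> Av s ((\<M> - {M}) \<union> {M'}))"

end

theory Submission
  imports Defs
begin

text \<open>The canonical \<open>m\<close>-basis \<open>K\<close> always avoids exactly \<open>C\<close>, and it can never be improved
  by replacing an element by a proper submatrix, since such a submatrix is either a pattern of
  \<open>C\<close> or contradicts the minimality of the element. Conversely every element of a minimal
  \<open>m\<close>-basis lies above some element of \<open>K\<close> and may be replaced by it, so it belongs to \<open>K\<close>.
  Finally, a permutation (polyomino) \<open>P\<close> containing \<open>M \<in> K\<close> but no other element of \<open>K\<close>
  lies outside \<open>C\<close>, so every \<open>m\<close>-basis contained in \<open>K\<close> must contain \<open>M\<close>; this gives both the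
  minimality of \<open>K\<close> and the uniqueness.\<close>

lemma strict_mono_on_lessThan_ge:
  fixes r :: "nat \<Rightarrow> nat"
  assumes "strict_mono_on {..<m} r" "i < m"
  shows "i \<le> r i"
  using assms(2)
proof (induction i)
  case (Suc i)
  then have "r i < r (Suc i)" using strict_mono_onD[OF assms(1), of i "Suc i"] by simp
  with Suc show ?case by simp
qed simp

lemma strict_mono_on_lessThan_room:
  fixes r :: "nat \<Rightarrow> nat"
  assumes "strict_mono_on {..<m} r" "r ` {..<m} \<subseteq> {..<k}" "i < m"
  shows "r i + (m - i) \<le> k"
  using assms(3)
proof (induction "m - i" arbitrary: i)
  case (Suc d)
  show ?case
  proof (cases "Suc i < m")
    case True
    have "r i < r (Suc i)" using strict_mono_onD[OF assms(1), of i "Suc i"] True by simp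
    moreover have "r (Suc i) + (m - Suc i) \<le> k" using Suc True by simp
    ultimately show ?thesis using True by simp
  next
    case False
    then show ?thesis using Suc assms(2) by auto
  qed
qed simp

lemma strict_mono_on_lessThan_le:
  fixes r :: "nat \<Rightarrow> nat"
  assumes "strict_mono_on {..<m} r" "r ` {..<m} \<subseteq> {..<k}"
  shows "m \<le> k"
  using strict_mono_on_lessThan_room[OF assms, of 0] by (cases "m = 0") auto

lemma strict_mono_on_lessThan_self_eq_id:
  fixes r :: "nat \<Rightarrow> nat"
  assumes "strict_mono_on {..<m} r" "r ` {..<m} \<subseteq> {..<m}" "i < m"
  shows "r i = i"
  using strict_mono_on_lessThan_room[OF assms] strict_mono_on_lessThan_ge[OF assms(1,3)] by simp

lemma submat_Pair:
  "(m', n', g) \<preccurlyeq> (m, n, f) \<longleftrightarrow> wf_bmat (m', n', g) \<and> wf_bmat (m, n, f) \<and>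
     (\<exists>r c. strict_mono_on {..<m'} r \<and> r ` {..<m'} \<subseteq> {..<m} \<and>
            strict_mono_on {..<n'} c \<and> c ` {..<n'} \<subseteq> {..<n} \<and>
            (\<forall>i<m'. \<forall>j<n'. g i j = f (r i) (c j)))"
  by (simp add: submat_def)

lemma submat_wf: "M' \<preccurlyeq> M \<Longrightarrow> wf_bmat M' \<and> wf_bmat M"
  by (simp add: submat_def)

lemma submat_refl: "wf_bmat M \<Longrightarrow> M \<preccurlyeq> M"
  by (cases M) (auto simp: submat_Pair strict_mono_on_def intro!: exI[of _ id])

lemma strict_mono_on_comp_lessThan:
  fixes r r' :: "nat \<Rightarrow> nat"
  assumes "strict_mono_on {..<a} r" "r ` {..<a} \<subseteq> {..<b}" "strict_mono_on {..<b} r'"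
  shows "strict_mono_on {..<a} (r' \<circ> r)"
proof (rule strict_mono_onI)
  fix i j assume "i \<in> {..<a}" "j \<in> {..<a}" "i < j"
  then show "(r' \<circ> r) i < (r' \<circ> r) j"
    using assms strict_mono_onD[OF assms(1)] strict_mono_onD[OF assms(3)] by auto
qed

lemma submat_trans:
  assumes "A \<preccurlyeq> B" "B \<preccurlyeq> D" shows "A \<preccurlyeq> D"
proof -
  obtain a1 a2 g b1 b2 h d1 d2 f where ABD: "A = (a1, a2, g)" "B = (b1, b2, h)" "D = (d1, d2, f)"
    by (metis prod.exhaust)
  from assms(1) obtain r c where rc: "strict_mono_on {..<a1} r" "r ` {..<a1} \<subseteq> {..<b1}"
    "strict_mono_on {..<a2} c" "c ` {..<a2} \<subseteq> {..<b2}" "\<forall>i<a1. \<forall>j<a2. g i j = h (r i) (c j)"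
    by (auto simp: ABD submat_Pair)
  from assms(2) obtain r' c' where rc': "strict_mono_on {..<b1} r'" "r' ` {..<b1} \<subseteq> {..<d1}"
    "strict_mono_on {..<b2} c'" "c' ` {..<b2} \<subseteq> {..<d2}" "\<forall>i<b1. \<forall>j<b2. h i j = f (r' i) (c' j)"
    by (auto simp: ABD submat_Pair)
  have "\<forall>i<a1. \<forall>j<a2. g i j = f ((r' \<circ> r) i) ((c' \<circ> c) j)"
    using rc(2,4,5) rc'(5) by (auto simp: image_subset_iff)
  moreover have "(r' \<circ> r) ` {..<a1} \<subseteq> {..<d1}" "(c' \<circ> c) ` {..<a2} \<subseteq> {..<d2}"
    using rc(2,4) rc'(2,4) by (auto simp: image_subset_iff)
  moreover have "wf_bmat A" "wf_bmat D" using assms submat_wf by blast+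
  ultimately show ?thesis
    unfolding ABD submat_Pair
    using strict_mono_on_comp_lessThan[OF rc(1,2) rc'(1)] strict_mono_on_comp_lessThan[OF rc(3,4) rc'(3)]
    by blast
qed

definition bmat_size :: "bmat \<Rightarrow> nat" where
  "bmat_size M = fst M + fst (snd M)"

lemma submat_size_less:
  assumes "A \<preccurlyeq> B" "A \<noteq> B" shows "bmat_size A < bmat_size B"
proof -
  obtain a1 a2 g b1 b2 h where AB: "A = (a1, a2, g)" "B = (b1, b2, h)"
    by (metis prod.exhaust)
  from assms(1) obtain r c where rc: "strict_mono_on {..<a1} r" "r ` {..<a1} \<subseteq> {..<b1}"
    "strict_mono_on {..<a2} c" "c ` {..<a2} \<subseteq> {..<b2}" "\<forall>i<a1. \<forall>j<a2. g i j = h (r i) (c j)"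
    and wf: "wf_bmat A" "wf_bmat B"
    by (auto simp: AB submat_Pair)
  have le: "a1 \<le> b1" "a2 \<le> b2"
    using strict_mono_on_lessThan_le rc by blast+
  show ?thesis
  proof (rule ccontr)
    assume "\<not> ?thesis"
    then have eq: "a1 = b1" "a2 = b2" using le by (auto simp: bmat_size_def AB)
    then have "\<forall>i<a1. \<forall>j<a2. g i j = h i j"
      using rc(5) strict_mono_on_lessThan_self_eq_id[OF rc(1)] strict_mono_on_lessThan_self_eq_id[OF rc(3)]
        rc(2,4) eq by simp
    then have "g = h" using wf eq by (auto simp: AB wf_bmat_def intro!: ext)
    then show False using assms(2) eq AB by simp
  qed
qed

lemma ex_minimal_submat_below:
  assumes "X \<in> S" "\<forall>Y\<in>S. wf_bmat Y"
  obtains Y where "Y \<in> S" "Y \<preccurlyeq> X" "\<forall>Z\<in>S. Z \<preccurlyeq> Y \<longrightarrow> Z = Y"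
proof -
  obtain Y where Y: "Y \<in> S" "Y \<preccurlyeq> X"
    and least: "\<forall>Z. Z \<in> S \<and> Z \<preccurlyeq> X \<longrightarrow> bmat_size Y \<le> bmat_size Z"
    using ex_has_least_nat[of "\<lambda>Y. Y \<in> S \<and> Y \<preccurlyeq> X" X bmat_size] assms submat_refl by blast
  have "Z = Y" if "Z \<in> S" "Z \<preccurlyeq> Y" for Z
  proof -
    have "bmat_size Y \<le> bmat_size Z" using least that submat_trans[OF that(2) Y(2)] by blast
    then show ?thesis using submat_size_less[OF that(2)] by (meson not_le)
  qed
  then show ?thesis using that Y by blast
qed

lemma quasi_perm_mat_submat:
  assumes "A \<preccurlyeq> B" "is_quasi_perm_mat B" shows "is_quasi_perm_mat A"
proof -
  obtain a1 a2 g b1 b2 h where AB: "A = (a1, a2, g)" "B = (b1, b2, h)"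
    by (metis prod.exhaust)
  from assms(1) obtain r c where rc: "strict_mono_on {..<a1} r" "r ` {..<a1} \<subseteq> {..<b1}"
    "strict_mono_on {..<a2} c" "c ` {..<a2} \<subseteq> {..<b2}" "\<forall>i<a1. \<forall>j<a2. g i j = h (r i) (c j)"
    and wf: "wf_bmat A" "wf_bmat B"
    by (auto simp: AB submat_Pair)
  have inj: "inj_on r {..<a1}" "inj_on c {..<a2}"
    using rc(1,3) strict_mono_on_imp_inj_on by blast+
  have q: "\<forall>i j j'. h i j \<and> h i j' \<longrightarrow> j = j'" "\<forall>i i' j. h i j \<and> h i' j \<longrightarrow> i = i'"
    using assms(2) by (auto simp: AB is_quasi_perm_mat_def)
  have g: "i < a1 \<and> j < a2 \<and> h (r i) (c j)" if "g i j" for i j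
  proof -
    have "i < a1" "j < a2" using wf that by (auto simp: AB wf_bmat_def)
    then show ?thesis using rc(5) that by simp
  qed
  have "j = j'" if "g i j" "g i j'" for i j j'
  proof -
    have "c j = c j'" using g[OF that(1)] g[OF that(2)] q(1) by blast
    then show ?thesis using g[OF that(1)] g[OF that(2)] inj(2) by (simp add: inj_on_def)
  qed
  moreover have "i = i'" if "g i j" "g i' j" for i i' j
  proof -
    have "r i = r i'" using g[OF that(1)] g[OF that(2)] q(2) by blast
    then show ?thesis using g[OF that(1)] g[OF that(2)] inj(1) by (simp add: inj_on_def)
  qed
  ultimately show ?thesis using wf by (auto simp: is_quasi_perm_mat_def AB)
qed

lemma perm_mat_imp_quasi_perm_mat:
  assumes "is_perm_mat M" shows "is_quasi_perm_mat M"
proof -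
  obtain m n f where M: "M = (m, n, f)" by (metis prod.exhaust)
  from assms obtain \<sigma> where \<sigma>: "\<sigma> permutes {..<n}" "\<forall>i<n. \<forall>j<n. f i j = (i = \<sigma> j)"
    and wf: "wf_bmat M" and "m = n"
    unfolding is_perm_mat_def M by (simp only: prod.case) blast
  have f: "i = \<sigma> j" if "f i j" for i j
  proof -
    have "i < n" "j < n" using that wf \<open>m = n\<close> unfolding M wf_bmat_def by simp_all
    then show ?thesis using that \<sigma>(2) by blast
  qed
  have "inj \<sigma>" using permutes_inj[OF \<sigma>(1)] .
  then have "\<forall>i j j'. f i j \<and> f i j' \<longrightarrow> j = j'" "\<forall>i i' j. f i j \<and> f i' j \<longrightarrow> i = i'"
    using f by (metis injD)+
  then show ?thesis using wf unfolding is_quasi_perm_mat_def M by simp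
qed

lemma amb_wf: "amb s M \<Longrightarrow> wf_bmat M"
  by (cases s) (auto simp: is_quasi_perm_mat_def)

lemma amb_submat: "M' \<preccurlyeq> M \<Longrightarrow> amb s M \<Longrightarrow> amb s M'"
  by (cases s) (auto intro: quasi_perm_mat_submat dest: submat_wf)

lemma obj_imp_amb: "obj s P \<Longrightarrow> amb s P"
  by (cases s) (auto intro: perm_mat_imp_quasi_perm_mat simp: is_polyomino_def)

lemma canonical_mbasisD:
  assumes "M \<in> canonical_mbasis s C"
  shows "amb s M" "M \<notin> cplus C" "amb s M' \<Longrightarrow> M' \<notin> cplus C \<Longrightarrow> M' \<preccurlyeq> M \<Longrightarrow> M' = M"
  using assms unfolding canonical_mbasis_def by blast+

lemma canonical_mbasis_below:
  assumes "amb s N" "N \<notin> cplus C"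
  obtains M where "M \<in> canonical_mbasis s C" "M \<preccurlyeq> N"
proof -
  let ?S = "{M. amb s M \<and> M \<notin> cplus C}"
  obtain Y where "Y \<in> ?S" "Y \<preccurlyeq> N" "\<forall>Z\<in>?S. Z \<preccurlyeq> Y \<longrightarrow> Z = Y"
    using ex_minimal_submat_below[of N ?S] assms amb_wf by blast
  then show ?thesis using that unfolding canonical_mbasis_def by blast
qed

lemma Av_canonical_mbasis:
  assumes "is_class s C"
  shows "Av s (canonical_mbasis s C) = C"
proof
  show "C \<subseteq> Av s (canonical_mbasis s C)"
    using assms unfolding Av_def is_class_def canonical_mbasis_def cplus_def by blast
next
  show "Av s (canonical_mbasis s C) \<subseteq> C"
  proof
    fix P assume P: "P \<in> Av s (canonical_mbasis s C)"
    then have "obj s P" unfolding Av_def by blast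
    show "P \<in> C"
    proof (rule ccontr)
      assume "P \<notin> C"
      then have "P \<notin> cplus C"
        using assms \<open>obj s P\<close> unfolding cplus_def is_class_def by blast
      then show False
        using canonical_mbasis_below[OF obj_imp_amb[OF \<open>obj s P\<close>]] P unfolding Av_def by blast
    qed
  qed
qed

lemma canonical_mbasis_is_mbasis:
  assumes "is_class s C" shows "is_mbasis s C (canonical_mbasis s C)"
proof -
  have "antichain_bm (canonical_mbasis s C)"
    unfolding antichain_bm_def using canonical_mbasisD by metis
  then show ?thesis
    using Av_canonical_mbasis[OF assms] amb_wf canonical_mbasisD(1) unfolding is_mbasis_def by blast
qed

lemma canonical_mbasis_replace_submat:
  assumes "M \<in> canonical_mbasis s C" "M' \<preccurlyeq> M" "M' \<noteq> M"
  shows "C \<noteq> Av s ((canonical_mbasis s C - {M}) \<union> {M'})"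
proof -
  have "M' \<in> cplus C"
    using canonical_mbasisD[OF assms(1)] amb_submat[OF assms(2)] assms(2,3) by blast
  then obtain Q where "Q \<in> C" "M' \<preccurlyeq> Q" unfolding cplus_def by blast
  then show ?thesis unfolding Av_def by blast
qed

lemma minimal_mbasis_subset_canonical_mbasis:
  assumes "is_minimal_mbasis s C N"
  shows "N \<subseteq> canonical_mbasis s C"
proof
  fix n assume n: "n \<in> N"
  have Av: "C = Av s N" and proper: "\<And>N'. N' \<subset> N \<Longrightarrow> C \<noteq> Av s N'"
    and replace: "\<And>n'. n' \<preccurlyeq> n \<Longrightarrow> n' = n \<or> C \<noteq> Av s ((N - {n}) \<union> {n'})"
    using assms n unfolding is_minimal_mbasis_def is_mbasis_def by blast+
  have "n \<notin> cplus C" using Av n unfolding cplus_def Av_def by blast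
  have "\<exists>P. obj s P \<and> n \<preccurlyeq> P"
  proof (rule ccontr)
    assume "\<not> ?thesis"
    then have "Av s (N - {n}) = Av s N" unfolding Av_def by blast
    then show False using proper[of "N - {n}"] Av n by blast
  qed
  then have "amb s n" using amb_submat obj_imp_amb by blast
  then obtain M where M: "M \<in> canonical_mbasis s C" "M \<preccurlyeq> n"
    using canonical_mbasis_below \<open>n \<notin> cplus C\<close> by blast
  have "\<not> M \<preccurlyeq> P" if "P \<in> C" for P
    using canonical_mbasisD(2)[OF M(1)] that unfolding cplus_def by blast
  then have "C = Av s ((N - {n}) \<union> {M})"
    using Av M(2) submat_trans unfolding Av_def by blast
  then have "M = n" using replace[OF M(2)] by blast
  then show "n \<in> canonical_mbasis s C" using M(1) by simp
qed

definition separated_by_objects :: "setting \<Rightarrow> bmat set \<Rightarrow> bool" where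
  "separated_by_objects s \<M> \<longleftrightarrow>
     (\<forall>M\<in>\<M>. \<exists>P. obj s P \<and> M \<preccurlyeq> P \<and> (\<forall>M'\<in>\<M>. M' \<noteq> M \<longrightarrow> \<not> M' \<preccurlyeq> P))"

lemma separated_superset_of_mbasis:
  assumes "separated_by_objects s \<M>" "\<M> \<inter> cplus C = {}" "N \<subseteq> \<M>" "C = Av s N"
  shows "\<M> \<subseteq> N"
proof
  fix M assume "M \<in> \<M>"
  then obtain P where P: "obj s P" "M \<preccurlyeq> P" "\<forall>M'\<in>\<M>. M' \<noteq> M \<longrightarrow> \<not> M' \<preccurlyeq> P"
    using assms(1) unfolding separated_by_objects_def by blast
  have "P \<notin> C" using assms(2) \<open>M \<in> \<M>\<close> P(2) unfolding cplus_def by blast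
  then obtain n where "n \<in> N" "n \<preccurlyeq> P" using assms(4) P(1) unfolding Av_def by blast
  moreover have "n = M" using \<open>n \<in> N\<close> \<open>n \<preccurlyeq> P\<close> assms(3) P(3) by blast
  ultimately show "M \<in> N" by simp
qed

theorem proposition7:
  fixes s :: setting and C :: "bmat set"
  assumes "is_class s C"
    and "\<forall>M\<in>canonical_mbasis s C. \<exists>P. obj s P \<and> M \<preccurlyeq> P \<and>
           (\<forall>M'\<in>canonical_mbasis s C. M' \<noteq> M \<longrightarrow> \<not> M' \<preccurlyeq> P)"
  shows "is_minimal_mbasis s C (canonical_mbasis s C) \<and> (\<exists>!\<M>. is_minimal_mbasis s C \<M>)"
proof -
  let ?K = "canonical_mbasis s C"
  have sep: "separated_by_objects s ?K"
    using assms(2) unfolding separated_by_objects_def .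
  have outside: "?K \<inter> cplus C = {}"
    using canonical_mbasisD(2) by blast
  have "C \<noteq> Av s \<M>'" if "\<M>' \<subset> ?K" for \<M>'
    using separated_superset_of_mbasis[OF sep outside, of \<M>'] that by blast
  then have minimal: "is_minimal_mbasis s C ?K"
    using canonical_mbasis_is_mbasis[OF assms(1)] canonical_mbasis_replace_submat
    unfolding is_minimal_mbasis_def by blast
  have "N = ?K" if "is_minimal_mbasis s C N" for N
    using minimal_mbasis_subset_canonical_mbasis[OF that] that
      separated_superset_of_mbasis[OF sep outside]
    unfolding is_minimal_mbasis_def is_mbasis_def by blast
  then show ?thesis using minimal by blast
qed

end
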